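(* Let $d,n\ge 1$, let $\boldsymbol{a}_1,\ldots,\boldsymbol{a}_n\in\mathbf{R}^d$, let $w_1,\ldots,w_n>0$, fix $\varepsilon>0$ and $0<p\le 2$. Define $\Phi(\boldsymbol{x})=\sum_{j=1}^n w_j\,(\lVert\boldsymbol{x}-\boldsymbol{a}_j\rVert^2+\varepsilon)^{p/2}$ with gradient $\Phi'(\boldsymbol{x})=p\sum_j w_j(\lVert\boldsymbol{x}-\boldsymbol{a}_j\rVert^2+\varepsilon)^{p/2-1}(\boldsymbol{x}-\boldsymbol{a}_j)$. For a point $\boldsymbol{x}^{(t)}\in\mathbf{R}^d$ let $\mu_j^{(t)}=w_j\,(\lVert\boldsymbol{x}^{(t)}-\boldsymbol{a}_j\rVert^2+\varepsilon)^{p/2-1}$, let $\boldsymbol{x}^{(t+1)}=\sum_j\mu_j^{(t)}\boldsymbol{a}_j/\sum_j\mu_j^{(t)}$, and define $$\Psi_t(\boldsymbol{x})=\Phi(\boldsymbol{x}^{(t)})+(\boldsymbol{x}-\boldsymbol{x}^{(t)})^T\Phi'(\boldsymbol{x}^{(t)})+\frac{p}{2}\Big(\sum_j\mu_j^{(t)}\Big)\lVert\boldsymbol{x}-\boldsymbol{x}^{(t)}\rVert^2.$$ Then (i) $\Phi(\boldsymbol{x})\le\Psi_t(\boldsymbol{x})$ for all $\boldsymbol{x}\in\mathbf{R}^d$; (ii) $\Phi(\boldsymbol{x}^{(t)})=\Psi_t(\boldsymbol{x}^{(t)})$; (iii) $\Psi_t$ has $\boldsymbol{x}^{(t+1)}$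 as its unique global minimizer.
   Context: $\lVert\cdot\rVert$ is the Euclidean norm on $\mathbf{R}^d$. *)

theory Defs
  imports "HOL-Analysis.Analysis"
begin

text \<open>Points a_1..a_n are a_0..a_(n-1), indexed by j < n; vectors live in real^'d.\<close>

definition Phi :: "nat \<Rightarrow> (nat \<Rightarrow> real ^ 'd) \<Rightarrow> (nat \<Rightarrow> real) \<Rightarrow> real \<Rightarrow> real \<Rightarrow> real ^ 'd \<Rightarrow> real" where
  "Phi n a w eps p x = (\<Sum>j<n. w j * (norm (x - a j) ^ 2 + eps) powr (p / 2))"

definition Phi' :: "nat \<Rightarrow> (nat \<Rightarrow> real ^ 'd) \<Rightarrow> (nat \<Rightarrow> real) \<Rightarrow> real \<Rightarrow> real \<Rightarrow> real ^ 'd \<Rightarrow> real ^ 'd" where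
  "Phi' n a w eps p x = p *\<^sub>R (\<Sum>j<n. (w j * (norm (x - a j) ^ 2 + eps) powr (p / 2 - 1)) *\<^sub>R (x - a j))"

definition mu :: "(nat \<Rightarrow> real ^ 'd) \<Rightarrow> (nat \<Rightarrow> real) \<Rightarrow> real \<Rightarrow> real \<Rightarrow> real ^ 'd \<Rightarrow> nat \<Rightarrow> real" where
  "mu a w eps p xt j = w j * (norm (xt - a j) ^ 2 + eps) powr (p / 2 - 1)"

definition next_iter :: "nat \<Rightarrow> (nat \<Rightarrow> real ^ 'd) \<Rightarrow> (nat \<Rightarrow> real) \<Rightarrow> real \<Rightarrow> real \<Rightarrow> real ^ 'd \<Rightarrow> real ^ 'd" where
  "next_iter n a w eps p xt =
     (1 / (\<Sum>j<n. mu a w eps p xt j)) *\<^sub>R (\<Sum>j<n. mu a w eps p xt j *\<^sub>R a j)"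

definition Psi :: "nat \<Rightarrow> (nat \<Rightarrow> real ^ 'd) \<Rightarrow> (nat \<Rightarrow> real) \<Rightarrow> real \<Rightarrow> real \<Rightarrow> real ^ 'd \<Rightarrow> real ^ 'd \<Rightarrow> real" where
  "Psi n a w eps p xt x = Phi n a w eps p xt + (x - xt) \<bullet> Phi' n a w eps p xt
     + (p / 2) * (\<Sum>j<n. mu a w eps p xt j) * norm (x - xt) ^ 2"

end

theory Submission
  imports Defs
begin

text \<open>For \<open>0 < p/2 \<le> 1\<close> the map \<open>s \<mapsto> s powr (p/2)\<close> is concave, hence below its tangent line at
  \<open>s = \<parallel>x\<^sub>t - a\<^sub>j\<parallel>\<^sup>2 + \<epsilon>\<close>. Substituting \<open>s = \<parallel>x - a\<^sub>j\<parallel>\<^sup>2 + \<epsilon>\<close>, expanding the square around \<open>x\<^sub>t\<close>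
  and summing with the weights \<open>w\<^sub>j\<close> gives \<open>\<Phi> \<le> \<Psi>\<^sub>t\<close>, with equality at \<open>x\<^sub>t\<close>. The gradient at \<open>x\<^sub>t\<close> is
  \<open>p M (x\<^sub>t - x\<^sub>t\<^sub>+\<^sub>1)\<close> with \<open>M = \<Sum>\<^sub>j \<mu>\<^sub>j > 0\<close>, so completing the square gives
  \<open>\<Psi>\<^sub>t x = \<Phi> x\<^sub>t + (p/2) M (\<parallel>x - x\<^sub>t\<^sub>+\<^sub>1\<parallel>\<^sup>2 - \<parallel>x\<^sub>t - x\<^sub>t\<^sub>+\<^sub>1\<parallel>\<^sup>2)\<close>, uniquely minimised at \<open>x\<^sub>t\<^sub>+\<^sub>1\<close>.\<close>

lemma powr_le_tangent:
  fixes u v r :: real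
  assumes "0 < r" "r \<le> 1" "0 < u" "0 < v"
  shows "u powr r \<le> v powr r + r * v powr (r - 1) * (u - v)"
proof -
  have young: "u powr r * v powr (1 - r) \<le> r * u + (1 - r) * v"
    using Youngs_inequality_0[of r "1 - r" u v] assms by simp
  have "u powr r = (u powr r * v powr (1 - r)) * v powr (r - 1)"
    using assms by (simp add: mult.assoc flip: powr_add)
  also have "\<dots> \<le> (r * u + (1 - r) * v) * v powr (r - 1)"
    using young assms by (simp add: mult_right_mono)
  also have "\<dots> = v powr r + r * v powr (r - 1) * (u - v)"
    using assms powr_add[of v 1 "r - 1"] by (simp add: algebra_simps)
  finally show ?thesis .
qed

lemma norm_diff_sq_expand:
  fixes x y a :: "'a::real_inner"
  shows "norm (x - a) ^ 2 = norm (y - a) ^ 2 + 2 * ((x - y) \<bullet> (y - a)) + norm (x - y) ^ 2"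
proof -
  have "x - a = (x - y) + (y - a)" by simp
  then show ?thesis
    by (simp only: power2_norm_eq_inner inner_add_left inner_add_right inner_commute[of "y - a" "x - y"])
qed

lemma powr_norm_sq_add_le_majorant:
  fixes x y a :: "'a::real_inner" and eps p :: real
  assumes "eps > 0" "0 < p" "p \<le> 2"
  shows "(norm (x - a) ^ 2 + eps) powr (p / 2)
    \<le> (norm (y - a) ^ 2 + eps) powr (p / 2)
      + (p / 2) * (norm (y - a) ^ 2 + eps) powr (p / 2 - 1)
        * (2 * ((x - y) \<bullet> (y - a)) + norm (x - y) ^ 2)"
proof -
  have "(norm (x - a) ^ 2 + eps) powr (p / 2) \<le> (norm (y - a) ^ 2 + eps) powr (p / 2)
      + (p / 2) * (norm (y - a) ^ 2 + eps) powr (p / 2 - 1)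
        * ((norm (x - a) ^ 2 + eps) - (norm (y - a) ^ 2 + eps))"
    using assms by (intro powr_le_tangent) (auto simp: add_nonneg_pos)
  then show ?thesis
    by (simp add: norm_diff_sq_expand[of x a y])
qed

lemma Phi_le_Psi:
  assumes "\<And>j. j < n \<Longrightarrow> w j \<ge> 0" "eps > 0" "0 < p" "p \<le> 2"
  shows "Phi n a w eps p x \<le> Psi n a w eps p xt x"
proof -
  let ?m = "mu a w eps p xt" and ?d = "x - xt"
  have "Phi n a w eps p x \<le> (\<Sum>j<n. w j * (norm (xt - a j) ^ 2 + eps) powr (p / 2)
      + p * (?m j * (?d \<bullet> (xt - a j))) + (p / 2) * ?m j * norm ?d ^ 2)"
    unfolding Phi_def
  proof (rule sum_mono)
    fix j assume "j \<in> {..<n}"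
    then have "w j \<ge> 0" using assms(1) by simp
    then have "w j * (norm (x - a j) ^ 2 + eps) powr (p / 2) \<le> w j * ((norm (xt - a j) ^ 2 + eps) powr (p / 2)
        + (p / 2) * (norm (xt - a j) ^ 2 + eps) powr (p / 2 - 1)
          * (2 * (?d \<bullet> (xt - a j)) + norm ?d ^ 2))"
      by (intro mult_left_mono powr_norm_sq_add_le_majorant assms(2-4))
    also have "\<dots> = w j * (norm (xt - a j) ^ 2 + eps) powr (p / 2)
        + p * (?m j * (?d \<bullet> (xt - a j))) + (p / 2) * ?m j * norm ?d ^ 2"
      by (simp add: mu_def ring_distribs mult_ac)
    finally show "w j * (norm (x - a j) ^ 2 + eps) powr (p / 2) \<le> w j * (norm (xt - a j) ^ 2 + eps) powr (p / 2)
        + p * (?m j * (?d \<bullet> (xt - a j))) + (p / 2) * ?m j * norm ?d ^ 2" .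
  qed
  also have "\<dots> = Phi n a w eps p xt + ?d \<bullet> Phi' n a w eps p xt
      + (p / 2) * (\<Sum>j<n. ?m j) * norm ?d ^ 2"
    by (simp add: Phi_def Phi'_def mu_def inner_sum_right sum.distrib
        sum_distrib_left sum_distrib_right)
  finally show ?thesis by (simp add: Psi_def)
qed

lemma sum_mu_pos:
  assumes "n \<ge> 1" "\<And>j. j < n \<Longrightarrow> w j > 0" "eps > 0"
  shows "(\<Sum>j<n. mu a w eps p xt j) > 0"
proof (rule sum_pos)
  show "finite {..<n}" "{..<n} \<noteq> {}" using assms(1) by (auto simp: lessThan_empty_iff)
  fix j assume "j \<in> {..<n}"
  moreover have "norm (xt - a j) ^ 2 + eps > 0"
    using assms(3) by (simp add: add_nonneg_pos)
  ultimately show "mu a w eps p xt j > 0"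
    using assms(2) by (simp add: mu_def)
qed

lemma Phi'_eq_scaled_step:
  assumes "(\<Sum>j<n. mu a w eps p xt j) \<noteq> 0"
  shows "Phi' n a w eps p xt
    = (p * (\<Sum>j<n. mu a w eps p xt j)) *\<^sub>R (xt - next_iter n a w eps p xt)"
  using assms
  by (simp add: Phi'_def next_iter_def mu_def scaleR_right_diff_distrib sum_subtractf
      flip: scaleR_sum_left)

lemma Psi_completed_square:
  assumes "(\<Sum>j<n. mu a w eps p xt j) \<noteq> 0"
  shows "Psi n a w eps p xt x = Phi n a w eps p xt
    + (p / 2) * (\<Sum>j<n. mu a w eps p xt j)
      * (norm (x - next_iter n a w eps p xt) ^ 2 - norm (xt - next_iter n a w eps p xt) ^ 2)"
  unfolding Psi_def Phi'_eq_scaled_step[OF assms]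
    norm_diff_sq_expand[of x "next_iter n a w eps p xt" xt]
  by (simp add: algebra_simps)

theorem proposition2:
  fixes n :: nat and a :: "nat \<Rightarrow> real ^ 'd" and w :: "nat \<Rightarrow> real"
    and eps p :: real and xt :: "real ^ 'd"
  assumes "n \<ge> 1"
    and "\<And>j. j < n \<Longrightarrow> w j > 0"
    and "eps > 0"
    and "0 < p" and "p \<le> 2"
  shows "(\<forall>x. Phi n a w eps p x \<le> Psi n a w eps p xt x)
    \<and> Phi n a w eps p xt = Psi n a w eps p xt xt
    \<and> (\<forall>x. x \<noteq> next_iter n a w eps p xt \<longrightarrow>
           Psi n a w eps p xt (next_iter n a w eps p xt) < Psi n a w eps p xt x)"
proof (intro conjI allI impI)
  show "Phi n a w eps p x \<le> Psi n a w eps p xt x" for x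
    using Phi_le_Psi[of n w eps p] assms by (simp add: less_imp_le)
  show "Phi n a w eps p xt = Psi n a w eps p xt xt"
    by (simp add: Psi_def)
  fix x assume "x \<noteq> next_iter n a w eps p xt"
  moreover have "(\<Sum>j<n. mu a w eps p xt j) > 0"
    using sum_mu_pos assms by blast
  ultimately show "Psi n a w eps p xt (next_iter n a w eps p xt) < Psi n a w eps p xt x"
    using assms(4) by (simp add: Psi_completed_square algebra_simps)
qed

end
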